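(* Let $m$ and $k$ be positive integers such that $m\ge k+3$ and $2m-1<R(m-k,3)$. Suppose that $F_v(2_r;r-k+1)\ge r+m$ for every integer $r\ge m-1$. Then $F_v(2_r;r-k+1)=r+m$ for every integer $r\ge m-1$.
   Context: All graphs are finite, simple and undirected. $\mathrm{cl}(G)$ is the clique number of $G$. $G\overset{v}{\to}(2_r)$ means that in every partition of $V(G)$ into $r$ pairwise disjoint parts some part contains an edge (equivalently $\chi(G)\ge r+1$). $H_v(2_r;q)$ is the set of graphs $G$ with $G\overset{v}{\to}(2_r)$ and $\mathrm{cl}(G)<q$; $F_v(2_r;q)=\min\{|V(G)|:G\in H_v(2_r;q)\}$. The Ramsey number $R(p,3)$ is the least $n$ such that every graph on at least $n$ vertices has a $p$-clique or an independent set of size $3$. *)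

theory Defs
  imports Main
begin

definition simple_graph :: "nat set \<Rightarrow> (nat \<Rightarrow> nat \<Rightarrow> bool) \<Rightarrow> bool" where
  "simple_graph V E \<longleftrightarrow> finite V \<and>
     (\<forall>u v. E u v \<longrightarrow> u \<in> V \<and> v \<in> V \<and> u \<noteq> v \<and> E v u)"

definition is_clique :: "nat set \<Rightarrow> (nat \<Rightarrow> nat \<Rightarrow> bool) \<Rightarrow> nat set \<Rightarrow> bool" where
  "is_clique V E K \<longleftrightarrow> K \<subseteq> V \<and> (\<forall>u\<in>K. \<forall>v\<in>K. u \<noteq> v \<longrightarrow> E u v)"

definition is_indep :: "nat set \<Rightarrow> (nat \<Rightarrow> nat \<Rightarrow> bool) \<Rightarrow> nat set \<Rightarrow> bool" where
  "is_indep V E S \<longleftrightarrow> S \<subseteq> V \<and> (\<forall>u\<in>S. \<forall>v\<in>S. \<not> E u v)"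

definition clique_num :: "nat set \<Rightarrow> (nat \<Rightarrow> nat \<Rightarrow> bool) \<Rightarrow> nat" where
  "clique_num V E = Max {card K | K. is_clique V E K}"

text \<open>G -v-> (2_r): every partition of V into r parts (colouring with colours < r)
  has a part containing an edge.\<close>
definition vertex_arrow :: "nat set \<Rightarrow> (nat \<Rightarrow> nat \<Rightarrow> bool) \<Rightarrow> nat \<Rightarrow> bool" where
  "vertex_arrow V E r \<longleftrightarrow>
     (\<forall>f :: nat \<Rightarrow> nat. (\<forall>v\<in>V. f v < r) \<longrightarrow> (\<exists>u\<in>V. \<exists>v\<in>V. E u v \<and> f u = f v))"

definition H_v :: "nat \<Rightarrow> nat \<Rightarrow> (nat set \<times> (nat \<Rightarrow> nat \<Rightarrow> bool)) set" where
  "H_v r q = {(V, E). simple_graph V E \<and> vertex_arrow V E r \<and> clique_num V E < q}"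

definition F_v :: "nat \<Rightarrow> nat \<Rightarrow> nat" where
  "F_v r q = (LEAST n. \<exists>V E. (V, E) \<in> H_v r q \<and> card V = n)"

definition ramsey_R :: "nat \<Rightarrow> nat \<Rightarrow> nat" where
  "ramsey_R p s = (LEAST n. \<forall>V E. simple_graph V E \<and> card V \<ge> n \<longrightarrow>
      (\<exists>K. is_clique V E K \<and> card K = p) \<or> (\<exists>S. is_indep V E S \<and> card S = s))"

end

theory Submission
  imports Defs
begin

(* The lower bound F_v(2_r; r-k+1) \<ge> r+m is assumed, so only the
   upper bound F_v(2_r; r-k+1) \<le> r+m has to be shown, by exhibiting a graph.
   Since 2m-1 < R(m-k,3), there is a graph on (at least, hence after passing to
   a subset exactly) 2m-1 vertices W with no (m-k)-clique and no independent
   3-set.  Join it with a complete graph K_t on t = r+1-m new vertices C.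
   The clique number of the join is < t + (m-k) = r-k+1.  In a proper colouring
   with r colours, C uses t colours not used on W, so W is properly coloured
   with at most m-1 colours; each colour class in W is independent, hence has at
   most 2 vertices, giving |W| \<le> 2(m-1) < 2m-1, a contradiction.  So the join
   lies in H_v(2_r; r-k+1) and has r+m vertices. *)

lemma clique_card_less:
  assumes "\<not> (\<exists>K. is_clique V E K \<and> card K = p)" and "is_clique V E K"
  shows "card K < p"
proof (rule ccontr)
  assume "\<not> card K < p"
  then obtain B where "B \<subseteq> K" "card B = p"
    using obtain_subset_with_card_n by (metis not_less)
  then have "is_clique V E B" using assms(2) unfolding is_clique_def by blast
  with \<open>card B = p\<close> assms(1) show False by blast
qed

lemma indep_card_less:
  assumes "\<not> (\<exists>S. is_indep V E S \<and> card S = s)" and "is_indep V E S"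
  shows "card S < s"
proof (rule ccontr)
  assume "\<not> card S < s"
  then obtain B where "B \<subseteq> S" "card B = s"
    using obtain_subset_with_card_n by (metis not_less)
  then have "is_indep V E B" using assms(2) unfolding is_indep_def by blast
  with \<open>card B = s\<close> assms(1) show False by blast
qed

lemma is_clique_mono: "is_clique W E K \<Longrightarrow> W \<subseteq> V \<Longrightarrow> is_clique V E K"
  unfolding is_clique_def by blast

lemma is_indep_mono: "is_indep W E S \<Longrightarrow> W \<subseteq> V \<Longrightarrow> is_indep V E S"
  unfolding is_indep_def by blast

lemma clique_num_less:
  assumes "finite V" and "\<And>K. is_clique V E K \<Longrightarrow> card K < q"
  shows "clique_num V E < q"
proof -
  let ?Q = "{card K | K. is_clique V E K}"
  have "?Q \<subseteq> card ` Pow V" unfolding is_clique_def by blast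
  then have "finite ?Q" using assms(1) finite_subset by blast
  moreover have "is_clique V E {}" unfolding is_clique_def by simp
  then have "?Q \<noteq> {}" by blast
  ultimately show ?thesis
    unfolding clique_num_def using assms(2) by (auto simp add: Max_less_iff)
qed

text \<open>If all independent sets have at most a vertices, a proper colouring f
  uses at least |W|/a colours: every colour class is independent.\<close>
lemma card_le_indep_times_colours:
  assumes "finite W"
    and indep: "\<And>S. is_indep W E S \<Longrightarrow> card S \<le> a"
    and proper: "\<And>u v. u \<in> W \<Longrightarrow> v \<in> W \<Longrightarrow> E u v \<Longrightarrow> f u \<noteq> f v"
  shows "card W \<le> a * card (f ` W)"
proof -
  define colour_class where "colour_class s = {w \<in> W. f w = s}" for s
  have "is_indep W E (colour_class s)" for s
    unfolding is_indep_def colour_class_def using proper by blast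
  then have colour_class_small: "card (colour_class s) \<le> a" for s using indep by blast
  have "W = (\<Union>s\<in>f ` W. colour_class s)" unfolding colour_class_def by blast
  then have "card W \<le> (\<Sum>s\<in>f ` W. card (colour_class s))"
    by (metis card_UN_le finite_imageI assms(1))
  also have "\<dots> \<le> (\<Sum>s\<in>f ` W. a)" by (rule sum_mono) (rule colour_class_small)
  also have "\<dots> = a * card (f ` W)" by simp
  finally show ?thesis .
qed

definition join_complete :: "nat set \<Rightarrow> (nat \<Rightarrow> nat \<Rightarrow> bool) \<Rightarrow> nat set \<Rightarrow> nat \<Rightarrow> nat \<Rightarrow> bool" where
  "join_complete W E C u v \<longleftrightarrow> (u \<in> W \<and> v \<in> W \<and> E u v) \<or>
     (u \<in> W \<union> C \<and> v \<in> W \<union> C \<and> u \<noteq> v \<and> (u \<in> C \<or> v \<in> C))"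

lemma join_complete_simple:
  assumes "simple_graph V E" and "W \<subseteq> V" and "finite C"
  shows "simple_graph (W \<union> C) (join_complete W E C)"
proof -
  have "finite (W \<union> C)"
    using assms finite_subset unfolding simple_graph_def by (metis finite_Un)
  moreover have "E u v \<Longrightarrow> E v u \<and> u \<noteq> v" for u v
    using assms(1) unfolding simple_graph_def by blast
  ultimately show ?thesis unfolding simple_graph_def join_complete_def by blast
qed

text \<open>A clique of the join splits into a clique of W and a part of C, so the
  clique number grows by at most |C|.\<close>
lemma join_complete_clique_num:
  assumes "finite W" and "finite C" and "W \<inter> C = {}"
    and small: "\<And>K. is_clique W E K \<Longrightarrow> card K < p"
  shows "clique_num (W \<union> C) (join_complete W E C) < card C + p"
proof (rule clique_num_less)
  show "finite (W \<union> C)" using assms(1,2) by simp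
  fix K assume K: "is_clique (W \<union> C) (join_complete W E C) K"
  then have "K = (K \<inter> W) \<union> (K \<inter> C)" unfolding is_clique_def by blast
  then have "card K \<le> card (K \<inter> W) + card (K \<inter> C)" by (metis card_Un_le)
  moreover have "card (K \<inter> C) \<le> card C" using assms(2) card_mono by (metis inf_le2)
  moreover have "is_clique W E (K \<inter> W)"
    using K assms(3) unfolding is_clique_def join_complete_def by blast
  then have "card (K \<inter> W) < p" by (rule small)
  ultimately show "card K < card C + p" by simp
qed

text \<open>In a proper r-colouring of the join, C takes |C| colours of its own, so
  W is properly coloured with r - |C| colours.\<close>
lemma join_complete_arrow:
  assumes "finite W" and "finite C" and "W \<inter> C = {}"
    and indep: "\<And>S. is_indep W E S \<Longrightarrow> card S \<le> 2"
    and big: "2 * r < 2 * card C + card W"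
  shows "vertex_arrow (W \<union> C) (join_complete W E C) r"
  unfolding vertex_arrow_def
proof (intro allI impI)
  fix f :: "nat \<Rightarrow> nat"
  assume colours: "\<forall>v\<in>W \<union> C. f v < r"
  show "\<exists>u\<in>W \<union> C. \<exists>v\<in>W \<union> C. join_complete W E C u v \<and> f u = f v"
  proof (rule ccontr)
    assume "\<not> ?thesis"
    then have proper: "\<And>u v. u \<in> W \<union> C \<Longrightarrow> v \<in> W \<union> C \<Longrightarrow> join_complete W E C u v
        \<Longrightarrow> f u \<noteq> f v" by blast
    have join_edge: "join_complete W E C u v" if "u \<in> W \<union> C" "v \<in> W \<union> C" "u \<noteq> v"
      "u \<in> C \<or> v \<in> C" for u v
      using that unfolding join_complete_def by blast
    have "inj_on f C"
    proof (rule inj_onI)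
      fix u v assume "u \<in> C" "v \<in> C" "f u = f v"
      then show "u = v" using proper join_edge by blast
    qed
    then have card_fC: "card (f ` C) = card C" by (rule card_image)
    have "f w \<noteq> f c" if "w \<in> W" "c \<in> C" for w c
    proof -
      have "w \<noteq> c" using that assms(3) by blast
      then show ?thesis using that proper join_edge by blast
    qed
    then have "f ` W \<inter> f ` C = {}" by blast
    then have "card (f ` W) + card C = card (f ` W \<union> f ` C)"
      using card_Un_disjoint assms(1,2) card_fC by (metis finite_imageI)
    also have "\<dots> \<le> r"
      using card_mono[of "{..<r}" "f ` W \<union> f ` C"] colours by auto
    finally have "card (f ` W) + card C \<le> r" .
    moreover have "card W \<le> 2 * card (f ` W)"
    proof (rule card_le_indep_times_colours[OF assms(1) indep])
      fix u v assume "u \<in> W" "v \<in> W" "E u v"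
      then show "f u \<noteq> f v" using proper[of u v] unfolding join_complete_def by blast
    qed
    ultimately show False using big by linarith
  qed
qed

lemma F_v_le: "(V, E) \<in> H_v r q \<Longrightarrow> F_v r q \<le> card V"
  unfolding F_v_def by (intro Least_le) blast

lemma F_v_upper_bound:
  assumes "simple_graph V E" and "W \<subseteq> V" and card_W: "card W = 2 * m - 1"
    and "m \<ge> 1"
    and no_clique: "\<not> (\<exists>K. is_clique V E K \<and> card K = p)"
    and no_indep: "\<not> (\<exists>S. is_indep V E S \<and> card S = 3)"
    and r: "r = t + (m - 1)"
  shows "F_v r (t + p) \<le> r + m"
proof -
  have "finite W"
    using assms(1) finite_subset[OF assms(2)] unfolding simple_graph_def by blast
  obtain N where "W \<subseteq> {..<N}"
    using \<open>finite W\<close> unfolding finite_nat_set_iff_bounded by blast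
  define C where "C = {N..<N + t}"
  have C: "finite C" "card C = t" "W \<inter> C = {}"
    using \<open>W \<subseteq> {..<N}\<close> unfolding C_def by auto
  have "card K < p" if "is_clique W E K" for K
    using clique_card_less[OF no_clique is_clique_mono[OF that assms(2)]] .
  then have clique_num: "clique_num (W \<union> C) (join_complete W E C) < t + p"
    using join_complete_clique_num[OF \<open>finite W\<close> C(1,3)] C(2) by metis
  have "card S \<le> 2" if "is_indep W E S" for S
    using indep_card_less[OF no_indep is_indep_mono[OF that assms(2)]] by simp
  moreover have "2 * r < 2 * card C + card W" using C(2) card_W r \<open>m \<ge> 1\<close> by simp
  ultimately have "vertex_arrow (W \<union> C) (join_complete W E C) r"
    by (rule join_complete_arrow[OF \<open>finite W\<close> C(1,3)])
  then have "(W \<union> C, join_complete W E C) \<in> H_v r (t + p)"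
    unfolding H_v_def using clique_num join_complete_simple[OF assms(1,2) C(1)] by simp
  then have "F_v r (t + p) \<le> card (W \<union> C)" by (rule F_v_le)
  also have "\<dots> = r + m"
    using card_Un_disjoint[OF \<open>finite W\<close> C(1,3)] C(2) card_W r \<open>m \<ge> 1\<close> by simp
  finally show ?thesis .
qed

lemma below_ramsey_witness:
  assumes "n < ramsey_R p s"
  obtains V E where "simple_graph V E" "card V \<ge> n"
    "\<not> (\<exists>K. is_clique V E K \<and> card K = p)" "\<not> (\<exists>S. is_indep V E S \<and> card S = s)"
proof -
  have "\<not> (\<forall>V E. simple_graph V E \<and> card V \<ge> n \<longrightarrow>
      (\<exists>K. is_clique V E K \<and> card K = p) \<or> (\<exists>S. is_indep V E S \<and> card S = s))"
    using assms not_less_Least unfolding ramsey_R_def by blast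
  then show ?thesis using that by blast
qed

theorem lemma2p3:
  fixes m k :: nat
  assumes "k \<ge> 1" and "m \<ge> k + 3"
    and "2 * m - 1 < ramsey_R (m - k) 3"
    and "\<forall>r. r \<ge> m - 1 \<longrightarrow> F_v r (r - k + 1) \<ge> r + m"
  shows "\<forall>r. r \<ge> m - 1 \<longrightarrow> F_v r (r - k + 1) = r + m"
proof (intro allI impI)
  fix r assume r: "r \<ge> m - 1"
  obtain V E where G: "simple_graph V E" "card V \<ge> 2 * m - 1"
    "\<not> (\<exists>K. is_clique V E K \<and> card K = m - k)" "\<not> (\<exists>S. is_indep V E S \<and> card S = 3)"
    using below_ramsey_witness[OF assms(3)] by blast
  obtain W where W: "W \<subseteq> V" "card W = 2 * m - 1"
    using obtain_subset_with_card_n[OF G(2)] by metis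
  have "F_v r ((r + 1 - m) + (m - k)) \<le> r + m"
    by (rule F_v_upper_bound[OF G(1) W _ G(3,4)]) (use r assms(2) in auto)
  moreover have "r - k + 1 = (r + 1 - m) + (m - k)" using r assms(2) by simp
  ultimately show "F_v r (r - k + 1) = r + m" using assms(4) r by (metis antisym)
qed

end
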